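(* Let $n\ge2$, $h\in(0,1]$, and for $0\le p\le2n$ let $\mathcal M_p$ be the set of minimizers of $H$ on $\mathcal C(p)$. (a) Suppose $0\le\epsilon\le1$. Let $p^*_1=\frac n2$ if $n$ is even, $p^*_1=\frac{n+1}2$ if $n$ is odd and $h\le\epsilon$, $p^*_1=\frac{n-1}2$ if $n$ is odd and $\epsilon<h$. Then the maximum of $H$ over $\bigcup_{0\le p\le2n}\mathcal M_p$ is attained by the configurations in $C(p^*_1,0,0)\cup C(0,p^*_1,0)$, and $\Gamma_m\ge\Gamma^1_m$, where $\Gamma^1_m=\frac{n^2}2+n(\epsilon-h)$ if $n$ is even, $\Gamma^1_m=\frac{n^2-1}2+(n+1)(\epsilon-h)$ if $n$ is odd and $h\le\epsilon$, $\Gamma^1_m=\frac{n^2-1}2+(n-1)(\epsilon-h)$ if $n$ is odd and $\epsilon<h$. (b) Suppose $0<-\epsilon<h$. Let $p^*_2=\frac{3n}2$ if $n$ is even and $p^*_2=\frac{3n-1}2$ if $n$ is odd. Then the maximum of $H$ over $\bigcup_{n\le p\le2n}\mathcal M_p$ is attained by the configurations in $C(n,p^*_2-n,p^*_2-n)\cup C(p^*_2-n,n,p^*_2-n)$, and $\Gamma_m\ge\Gamma^2_m$, where $\Gamma^2_m=\frac{n^2}2-n(\epsilon+h)$ if $n$ is even and $\Gamma^2_m=\frac{n^2-1}2-(n-1)(\epsilon+h)$ if $n$ is odd.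
   Context: Setup. The graph $\mathcal G(2,n)$ has vertex set $V=V^{(1)}\cup V^{(2)}$ with $V^{(1)}=\{1,\dots,n\}$, $V^{(2)}=\{n+1,\dots,2n\}$; its edge set is $E=E_{\mathrm{int}}\cup E_{\mathrm{cross}}$, where $E_{\mathrm{int}}$ consists of all pairs of distinct vertices in the same $V^{(k)}$ and $E_{\mathrm{cross}}=\{\{i,i+n\}:1\le i\le n\}$. The configuration space is $\mathcal X=\{-1,+1\}^V$ and $H(\sigma)=-\sum_{\{i,j\}\in E_{\mathrm{int}}}\sigma_i\sigma_j-\epsilon\sum_{\{i,j\}\in E_{\mathrm{cross}}}\sigma_i\sigma_j-h\sum_{i\in V}\sigma_i$, $\epsilon\in[-1,1]$. $C(p_1,p_2,a)$ is the set of configurations with exactly $p_1$ vertices of spin $+1$ in $V^{(1)}$, exactly $p_2$ vertices of spin $+1$ in $V^{(2)}$, and exactly $a$ cross-edges both of whose endpoints have spin $+1$. $\mathcal C(p)$ is the set of configurations with exactly $p$ vertices of spin $+1$. Energy landscape. Paths are sequences of configurations in which consecutive ones differ at exactly one vertex; $\Phi(\eta,\eta')=\min_{\omega:\eta\to\eta'}\max_{\zeta\in\omega}H(\zeta)$, $\Phi(\eta,A)=\min_{\eta'\in A}\Phi(\eta,\eta')$. The stability level is $V_\zeta=\Phi(\zeta,\{\eta:H(\eta)<H(\zeta)\})-H(\zeta)$ ($\infty$ if that set is empty). $\mathcal X_s$ is the set of global minimizers of $H$, and $\Gamma_m=\max_{\zeta\in\mathcal X\setminus\mathcal X_s}V_\zeta$.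 *)

theory Defs
  imports Complex_Main "HOL-Library.Extended_Real"
begin

text \<open>Graph G(2,n): vertices 1..2n; block 1 = {1..n}, block 2 = {n+1..2n};
  internal edges: distinct vertices in the same block; cross edges {i, i+n}.\<close>

definition Vtx :: "nat \<Rightarrow> nat set" where
  "Vtx n = {1..2*n}"

definition same_block :: "nat \<Rightarrow> nat \<Rightarrow> nat \<Rightarrow> bool" where
  "same_block n i j \<longleftrightarrow> ((i \<le> n) = (j \<le> n))"

definition config :: "nat \<Rightarrow> (nat \<Rightarrow> int) \<Rightarrow> bool" where
  "config n \<sigma> \<longleftrightarrow> (\<forall>i\<in>Vtx n. \<sigma> i = 1 \<or> \<sigma> i = -1) \<and> (\<forall>i. i \<notin> Vtx n \<longrightarrow> \<sigma> i = 0)"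

definition Xcfg :: "nat \<Rightarrow> (nat \<Rightarrow> int) set" where
  "Xcfg n = {\<sigma>. config n \<sigma>}"

definition Ham :: "nat \<Rightarrow> real \<Rightarrow> real \<Rightarrow> (nat \<Rightarrow> int) \<Rightarrow> real" where
  "Ham n \<epsilon> h \<sigma> =
     - (\<Sum>i\<in>Vtx n. \<Sum>j\<in>Vtx n. if i < j \<and> same_block n i j then real_of_int (\<sigma> i * \<sigma> j) else 0)
     - \<epsilon> * (\<Sum>i\<in>{1..n}. real_of_int (\<sigma> i * \<sigma> (i + n)))
     - h * (\<Sum>i\<in>Vtx n. real_of_int (\<sigma> i))"

definition Cset :: "nat \<Rightarrow> nat \<Rightarrow> nat \<Rightarrow> nat \<Rightarrow> (nat \<Rightarrow> int) set" where
  "Cset n p1 p2 a = {\<sigma>. config n \<sigma>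
       \<and> card {i\<in>{1..n}. \<sigma> i = 1} = p1
       \<and> card {i\<in>{n+1..2*n}. \<sigma> i = 1} = p2
       \<and> card {i\<in>{1..n}. \<sigma> i = 1 \<and> \<sigma> (i + n) = 1} = a}"

definition Cp :: "nat \<Rightarrow> nat \<Rightarrow> (nat \<Rightarrow> int) set" where
  "Cp n p = {\<sigma>. config n \<sigma> \<and> card {i\<in>Vtx n. \<sigma> i = 1} = p}"

definition Mp :: "nat \<Rightarrow> real \<Rightarrow> real \<Rightarrow> nat \<Rightarrow> (nat \<Rightarrow> int) set" where
  "Mp n \<epsilon> h p = {\<sigma>\<in>Cp n p. \<forall>\<tau>\<in>Cp n p. Ham n \<epsilon> h \<sigma> \<le> Ham n \<epsilon> h \<tau>}"

definition is_path :: "nat \<Rightarrow> (nat \<Rightarrow> int) list \<Rightarrow> (nat \<Rightarrow> int) \<Rightarrow> (nat \<Rightarrow> int) \<Rightarrow> bool" where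
  "is_path n \<omega> \<eta> \<eta>' \<longleftrightarrow> \<omega> \<noteq> [] \<and> hd \<omega> = \<eta> \<and> last \<omega> = \<eta>'
     \<and> (\<forall>\<zeta>\<in>set \<omega>. config n \<zeta>)
     \<and> (\<forall>k. Suc k < length \<omega> \<longrightarrow> card {i. (\<omega> ! k) i \<noteq> (\<omega> ! Suc k) i} = 1)"

definition Phi :: "nat \<Rightarrow> real \<Rightarrow> real \<Rightarrow> (nat \<Rightarrow> int) \<Rightarrow> (nat \<Rightarrow> int) \<Rightarrow> real" where
  "Phi n \<epsilon> h \<eta> \<eta>' = Inf {Max (Ham n \<epsilon> h ` set \<omega>) | \<omega>. is_path n \<omega> \<eta> \<eta>'}"

definition PhiSet :: "nat \<Rightarrow> real \<Rightarrow> real \<Rightarrow> (nat \<Rightarrow> int) \<Rightarrow> (nat \<Rightarrow> int) set \<Rightarrow> real" where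
  "PhiSet n \<epsilon> h \<eta> A = Inf {Phi n \<epsilon> h \<eta> \<eta>' | \<eta>'. \<eta>' \<in> A}"

definition stab :: "nat \<Rightarrow> real \<Rightarrow> real \<Rightarrow> (nat \<Rightarrow> int) \<Rightarrow> ereal" where
  "stab n \<epsilon> h \<zeta> =
     (let L = {\<eta>\<in>Xcfg n. Ham n \<epsilon> h \<eta> < Ham n \<epsilon> h \<zeta>} in
      if L = {} then \<infinity> else ereal (PhiSet n \<epsilon> h \<zeta> L - Ham n \<epsilon> h \<zeta>))"

definition Xs :: "nat \<Rightarrow> real \<Rightarrow> real \<Rightarrow> (nat \<Rightarrow> int) set" where
  "Xs n \<epsilon> h = {\<sigma>\<in>Xcfg n. \<forall>\<tau>\<in>Xcfg n. Ham n \<epsilon> h \<sigma> \<le> Ham n \<epsilon> h \<tau>}"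

definition Gamma_m :: "nat \<Rightarrow> real \<Rightarrow> real \<Rightarrow> ereal" where
  "Gamma_m n \<epsilon> h = Sup (stab n \<epsilon> h ` (Xcfg n - Xs n \<epsilon> h))"

definition pstar1 :: "nat \<Rightarrow> real \<Rightarrow> real \<Rightarrow> nat" where
  "pstar1 n \<epsilon> h = (if even n then n div 2 else if h \<le> \<epsilon> then (n + 1) div 2 else (n - 1) div 2)"

definition Gamma1 :: "nat \<Rightarrow> real \<Rightarrow> real \<Rightarrow> real" where
  "Gamma1 n \<epsilon> h = (if even n then real n ^ 2 / 2 + real n * (\<epsilon> - h)
     else if h \<le> \<epsilon> then (real n ^ 2 - 1) / 2 + (real n + 1) * (\<epsilon> - h)
     else (real n ^ 2 - 1) / 2 + (real n - 1) * (\<epsilon> - h))"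

definition pstar2 :: "nat \<Rightarrow> nat" where
  "pstar2 n = (if even n then 3 * n div 2 else (3 * n - 1) div 2)"

definition Gamma2 :: "nat \<Rightarrow> real \<Rightarrow> real \<Rightarrow> real" where
  "Gamma2 n \<epsilon> h = (if even n then real n ^ 2 / 2 - real n * (\<epsilon> + h)
     else (real n ^ 2 - 1) / 2 - (real n - 1) * (\<epsilon> + h))"

end

theory Submission
  imports Defs
begin

text \<open>The energy of a configuration depends only on the numbers \<open>p\<^sub>1, p\<^sub>2\<close> of plus spins in the
  two blocks and the number \<open>a\<close> of plus-plus cross edges. Because \<open>a \<le> p\<^sub>1 p\<^sub>2\<close>, for \<open>\<epsilon> \<le> 1\<close> the
  energy on \<open>\<C>(p)\<close> is minimal when all plus spins sit in one block; for \<open>\<epsilon> \<le> 0\<close> and \<open>p \<ge> n\<close>,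
  because \<open>a \<ge> p\<^sub>1 + p\<^sub>2 - n\<close>, it is minimal when one block is full and the other plus spins face
  plus spins. These minimal energies are concave quadratics in \<open>p\<close> with integer maximiser \<open>p\<^sup>*\<close>.
  Starting from the all-minus configuration (resp. from the configuration with only the first block
  plus), every configuration with fewer than \<open>p\<^sup>*\<close> plus spins has at least the starting energy, so a
  path to lower energy must cross \<open>\<C>(p\<^sup>*)\<close>; this barrier bounds \<open>\<Gamma>\<^sub>m\<close> from below.\<close>

definition up1 :: "nat \<Rightarrow> (nat \<Rightarrow> int) \<Rightarrow> nat" where
  "up1 n \<sigma> = card {i\<in>{1..n}. \<sigma> i = 1}"

definition up2 :: "nat \<Rightarrow> (nat \<Rightarrow> int) \<Rightarrow> nat" where
  "up2 n \<sigma> = card {i\<in>{n+1..2*n}. \<sigma> i = 1}"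

definition up_cross :: "nat \<Rightarrow> (nat \<Rightarrow> int) \<Rightarrow> nat" where
  "up_cross n \<sigma> = card {i\<in>{1..n}. \<sigma> i = 1 \<and> \<sigma> (i + n) = 1}"

definition up :: "nat \<Rightarrow> (nat \<Rightarrow> int) \<Rightarrow> nat" where
  "up n \<sigma> = card {i\<in>Vtx n. \<sigma> i = 1}"

definition energy_of_counts :: "nat \<Rightarrow> real \<Rightarrow> real \<Rightarrow> nat \<Rightarrow> nat \<Rightarrow> nat \<Rightarrow> real" where
  "energy_of_counts n \<epsilon> h p1 p2 a =
     - ((2 * real p1 - real n)\<^sup>2 + (2 * real p2 - real n)\<^sup>2 - 2 * real n) / 2
     - \<epsilon> * (real n - 2 * real p1 - 2 * real p2 + 4 * real a)
     - h * (2 * real p1 + 2 * real p2 - 2 * real n)"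

lemma Vtx_split: "Vtx n = {1..n} \<union> {n+1..2*n}"
  by (auto simp: Vtx_def)

lemma Cset_iff:
  "\<sigma> \<in> Cset n p1 p2 a \<longleftrightarrow> config n \<sigma> \<and> up1 n \<sigma> = p1 \<and> up2 n \<sigma> = p2 \<and> up_cross n \<sigma> = a"
  by (simp add: Cset_def up1_def up2_def up_cross_def)

lemma Cp_iff: "\<sigma> \<in> Cp n p \<longleftrightarrow> config n \<sigma> \<and> up n \<sigma> = p"
  by (simp add: Cp_def up_def)

lemma up2_eq_shifted_count: "up2 n \<sigma> = card {i\<in>{1..n}. \<sigma> (i + n) = 1}"
proof -
  have "{i\<in>{n+1..2*n}. \<sigma> i = 1} = (\<lambda>i. i + n) ` {i\<in>{1..n}. \<sigma> (i + n) = 1}"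
  proof (intro equalityI subsetI)
    fix x assume "x \<in> {i\<in>{n+1..2*n}. \<sigma> i = 1}"
    then show "x \<in> (\<lambda>i. i + n) ` {i\<in>{1..n}. \<sigma> (i + n) = 1}"
      by (intro image_eqI[where x = "x - n"]) auto
  qed auto
  then show ?thesis
    by (simp add: up2_def card_image)
qed

lemma up_eq_up1_plus_up2: "up n \<sigma> = up1 n \<sigma> + up2 n \<sigma>"
proof -
  have "{i\<in>Vtx n. \<sigma> i = 1} = {i\<in>{1..n}. \<sigma> i = 1} \<union> {i\<in>{n+1..2*n}. \<sigma> i = 1}"
    by (auto simp: Vtx_def)
  then show ?thesis
    by (simp add: up_def up1_def up2_def card_Un_disjoint disjoint_iff)
qed

lemma up_counts_bounds:
  "up1 n \<sigma> \<le> n" "up2 n \<sigma> \<le> n" "up_cross n \<sigma> \<le> up1 n \<sigma>" "up_cross n \<sigma> \<le> up2 n \<sigma>"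
  "up1 n \<sigma> + up2 n \<sigma> \<le> n + up_cross n \<sigma>"
proof -
  let ?X = "{i\<in>{1..n}. \<sigma> i = 1}" and ?Y = "{i\<in>{1..n}. \<sigma> (i + n) = 1}"
  have "?X \<inter> ?Y = {i\<in>{1..n}. \<sigma> i = 1 \<and> \<sigma> (i + n) = 1}"
    by auto
  then have XY: "up1 n \<sigma> = card ?X" "up2 n \<sigma> = card ?Y" "up_cross n \<sigma> = card (?X \<inter> ?Y)"
    by (simp_all add: up1_def up2_eq_shifted_count up_cross_def)
  have "card ?X \<le> card {1..n}" "card ?Y \<le> card {1..n}" "card (?X \<union> ?Y) \<le> card {1..n}"
    by (intro card_mono; auto)+
  moreover have "card (?X \<inter> ?Y) \<le> card ?X" "card (?X \<inter> ?Y) \<le> card ?Y"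
    by (intro card_mono; auto)+
  moreover have "card (?X \<union> ?Y) + card (?X \<inter> ?Y) = card ?X + card ?Y"
    using card_Un_Int[of ?X ?Y] by simp
  ultimately show "up1 n \<sigma> \<le> n" "up2 n \<sigma> \<le> n" "up_cross n \<sigma> \<le> up1 n \<sigma>"
    "up_cross n \<sigma> \<le> up2 n \<sigma>" "up1 n \<sigma> + up2 n \<sigma> \<le> n + up_cross n \<sigma>"
    unfolding XY by simp_all
qed

lemma sum_pairs_less:
  fixes f :: "'a::linorder \<Rightarrow> real"
  assumes "finite A"
  shows "(\<Sum>i\<in>A. \<Sum>j\<in>A. if i < j then f i * f j else 0) = ((\<Sum>i\<in>A. f i)\<^sup>2 - (\<Sum>i\<in>A. (f i)\<^sup>2)) / 2"
proof -
  let ?T = "\<Sum>i\<in>A. \<Sum>j\<in>A. if i < j then f i * f j else 0"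
  have product_split: "f i * f j = (if i < j then f i * f j else 0) + (if j < i then f j * f i else 0)
      + (if i = j then (f i)\<^sup>2 else 0)" for i j
  proof (cases i j rule: linorder_cases)
    case less
    then have "\<not> j < i" "i \<noteq> j" by auto
    with less show ?thesis by simp
  next
    case greater
    then have "\<not> i < j" "i \<noteq> j" by auto
    with greater show ?thesis by (simp add: mult.commute)
  qed (simp add: power2_eq_square)
  have "(\<Sum>i\<in>A. f i)\<^sup>2 = (\<Sum>i\<in>A. \<Sum>j\<in>A. f i * f j)"
    by (simp add: power2_eq_square sum_product)
  also have "\<dots> = (\<Sum>i\<in>A. \<Sum>j\<in>A. (if i < j then f i * f j else 0) + (if j < i then f j * f i else 0)
      + (if i = j then (f i)\<^sup>2 else 0))"
    by (intro sum.cong refl product_split)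
  also have "\<dots> = ?T + (\<Sum>i\<in>A. \<Sum>j\<in>A. if j < i then f j * f i else 0) + (\<Sum>i\<in>A. (f i)\<^sup>2)"
    by (simp add: sum.distrib assms)
  also have "(\<Sum>i\<in>A. \<Sum>j\<in>A. if j < i then f j * f i else 0) = ?T"
    by (rule sum.swap)
  finally show ?thesis by simp
qed

lemma internal_pairs_split:
  fixes g :: "nat \<Rightarrow> nat \<Rightarrow> real"
  shows "(\<Sum>i\<in>Vtx n. \<Sum>j\<in>Vtx n. if i < j \<and> same_block n i j then g i j else 0)
    = (\<Sum>i\<in>{1..n}. \<Sum>j\<in>{1..n}. if i < j then g i j else 0)
      + (\<Sum>i\<in>{n+1..2*n}. \<Sum>j\<in>{n+1..2*n}. if i < j then g i j else 0)"
proof -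
  let ?t = "\<lambda>i j. if i < j \<and> same_block n i j then g i j else 0"
  have "(\<Sum>j\<in>Vtx n. ?t i j) = (\<Sum>j\<in>{1..n}. if i < j then g i j else 0)" if "i \<in> {1..n}" for i
    using that unfolding Vtx_split
    by (subst sum.union_disjoint) (auto simp: same_block_def intro!: sum.neutral sum.cong)
  moreover have "(\<Sum>j\<in>Vtx n. ?t i j) = (\<Sum>j\<in>{n+1..2*n}. if i < j then g i j else 0)"
    if "i \<in> {n+1..2*n}" for i
    using that unfolding Vtx_split
    by (subst sum.union_disjoint) (auto simp: same_block_def intro!: sum.neutral sum.cong)
  ultimately show ?thesis
    unfolding Vtx_split[of n] by (subst sum.union_disjoint) (auto intro!: arg_cong2[where f = "(+)"] sum.cong)
qed

lemma config_spin_cases: "config n \<sigma> \<Longrightarrow> i \<in> Vtx n \<Longrightarrow> \<sigma> i = 1 \<or> \<sigma> i = -1"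
  by (simp add: config_def)

lemma real_card_filter: "finite A \<Longrightarrow> real (card {i\<in>A. P i}) = (\<Sum>i\<in>A. if P i then 1 else 0)"
  by (simp add: sum.inter_filter[symmetric])

lemma sum_spins_eq_count:
  assumes "config n \<sigma>" and "B \<subseteq> Vtx n"
  shows "(\<Sum>i\<in>B. real_of_int (\<sigma> i)) = 2 * real (card {i\<in>B. \<sigma> i = 1}) - real (card B)"
proof -
  have "finite B"
    using assms(2) finite_subset by (auto simp: Vtx_def)
  have "(\<Sum>i\<in>B. real_of_int (\<sigma> i)) = (\<Sum>i\<in>B. 2 * (if \<sigma> i = 1 then 1 else 0) - 1)"
    using assms config_spin_cases by (intro sum.cong) force+
  also have "\<dots> = 2 * real (card {i\<in>B. \<sigma> i = 1}) - real (card B)"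
    using \<open>finite B\<close> by (simp add: sum_subtractf sum_distrib_left real_card_filter)
  finally show ?thesis .
qed

lemma sum_spin_squares_eq_card:
  assumes "config n \<sigma>" and "B \<subseteq> Vtx n"
  shows "(\<Sum>i\<in>B. (real_of_int (\<sigma> i))\<^sup>2) = real (card B)"
  using assms config_spin_cases by (subst sum.cong[where h = "\<lambda>_. 1"]) force+

lemma internal_energy_eq:
  assumes "config n \<sigma>"
  shows "(\<Sum>i\<in>Vtx n. \<Sum>j\<in>Vtx n. if i < j \<and> same_block n i j then real_of_int (\<sigma> i * \<sigma> j) else 0)
    = ((2 * real (up1 n \<sigma>) - real n)\<^sup>2 + (2 * real (up2 n \<sigma>) - real n)\<^sup>2 - 2 * real n) / 2"
proof -
  have block: "(\<Sum>i\<in>B. \<Sum>j\<in>B. if i < j then real_of_int (\<sigma> i * \<sigma> j) else 0)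
      = ((2 * real (card {i\<in>B. \<sigma> i = 1}) - real n)\<^sup>2 - real n) / 2"
    if "B \<subseteq> Vtx n" "card B = n" for B
  proof -
    have "finite B"
      using that(1) finite_subset by (auto simp: Vtx_def)
    then show ?thesis
      unfolding of_int_mult using sum_pairs_less[of B "\<lambda>i. real_of_int (\<sigma> i)"] sum_spins_eq_count[OF assms that(1)]
        sum_spin_squares_eq_card[OF assms that(1)] that(2)
      by simp
  qed
  show ?thesis
    unfolding internal_pairs_split using block[of "{1..n}"] block[of "{n+1..2*n}"]
    by (simp add: Vtx_def up1_def up2_def add_divide_distrib diff_divide_distrib)
qed

lemma cross_energy_eq:
  assumes "config n \<sigma>"
  shows "(\<Sum>i\<in>{1..n}. real_of_int (\<sigma> i * \<sigma> (i + n)))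
     = 4 * real (up_cross n \<sigma>) - 2 * real (up1 n \<sigma>) - 2 * real (up2 n \<sigma>) + real n"
proof -
  let ?ind = "\<lambda>P. if P then 1 else (0::real)"
  have "real_of_int (\<sigma> i * \<sigma> (i + n))
      = 4 * ?ind (\<sigma> i = 1 \<and> \<sigma> (i + n) = 1) - 2 * ?ind (\<sigma> i = 1) - 2 * ?ind (\<sigma> (i + n) = 1) + 1"
    if "i \<in> {1..n}" for i
    using config_spin_cases[OF assms, of i] config_spin_cases[OF assms, of "i + n"] that
    by (auto simp: Vtx_def)
  then have "(\<Sum>i\<in>{1..n}. real_of_int (\<sigma> i * \<sigma> (i + n)))
      = 4 * (\<Sum>i\<in>{1..n}. ?ind (\<sigma> i = 1 \<and> \<sigma> (i + n) = 1)) - 2 * (\<Sum>i\<in>{1..n}. ?ind (\<sigma> i = 1))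
        - 2 * (\<Sum>i\<in>{1..n}. ?ind (\<sigma> (i + n) = 1)) + real n"
    by (simp add: sum.distrib sum_subtractf sum_distrib_left)
  then show ?thesis
    unfolding up_cross_def up1_def up2_eq_shifted_count real_card_filter[OF finite_atLeastAtMost] .
qed

lemma Ham_eq_energy_of_counts:
  assumes "config n \<sigma>"
  shows "Ham n \<epsilon> h \<sigma> = energy_of_counts n \<epsilon> h (up1 n \<sigma>) (up2 n \<sigma>) (up_cross n \<sigma>)"
proof -
  have "(\<Sum>i\<in>Vtx n. real_of_int (\<sigma> i))
      = (\<Sum>i\<in>{1..n}. real_of_int (\<sigma> i)) + (\<Sum>i\<in>{n+1..2*n}. real_of_int (\<sigma> i))"
    unfolding Vtx_split by (rule sum.union_disjoint) auto
  also have "\<dots> = 2 * real (up1 n \<sigma>) + 2 * real (up2 n \<sigma>) - 2 * real n"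
    using sum_spins_eq_count[OF assms, of "{1..n}"] sum_spins_eq_count[OF assms, of "{n+1..2*n}"]
    by (simp add: Vtx_def up1_def up2_def)
  finally have spins: "(\<Sum>i\<in>Vtx n. real_of_int (\<sigma> i)) = 2 * real (up1 n \<sigma>) + 2 * real (up2 n \<sigma>) - 2 * real n" .
  show ?thesis
    unfolding Ham_def internal_energy_eq[OF assms] cross_energy_eq[OF assms] spins energy_of_counts_def
    by (simp add: field_simps)
qed

lemma energy_of_counts_shift:
  "energy_of_counts n \<epsilon> h q1 q2 a
     = energy_of_counts n \<epsilon> h (q1 + q2) 0 0 + 4 * real q1 * real q2 - 4 * \<epsilon> * real a"
  unfolding energy_of_counts_def power2_eq_square by (simp add: field_simps)

lemma energy_of_counts_swap: "energy_of_counts n \<epsilon> h q2 q1 a = energy_of_counts n \<epsilon> h q1 q2 a"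
  using energy_of_counts_shift[of n \<epsilon> h q1 q2 a] energy_of_counts_shift[of n \<epsilon> h q2 q1 a]
  by (simp add: add.commute)

lemma Ham_ge_block1_energy:
  assumes "config n \<sigma>" and "\<epsilon> \<le> 1"
  shows "energy_of_counts n \<epsilon> h (up n \<sigma>) 0 0 \<le> Ham n \<epsilon> h \<sigma>"
proof -
  let ?q1 = "real (up1 n \<sigma>)" and ?q2 = "real (up2 n \<sigma>)" and ?a = "real (up_cross n \<sigma>)"
  have "?a \<le> ?q1 * ?q2"
  proof (cases "up_cross n \<sigma> = 0")
    case False
    then have "1 \<le> ?q2" using up_counts_bounds(4)[of n \<sigma>] by linarith
    then have "?q1 \<le> ?q1 * ?q2" by (simp add: mult_le_cancel_left1)
    then show ?thesis using up_counts_bounds(3)[of n \<sigma>] by linarith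
  qed simp
  moreover have "\<epsilon> * ?a \<le> ?a"
    using mult_right_mono[OF assms(2), of ?a] by simp
  ultimately show ?thesis
    unfolding Ham_eq_energy_of_counts[OF assms(1)] up_eq_up1_plus_up2
    using energy_of_counts_shift[of n \<epsilon> h "up1 n \<sigma>" "up2 n \<sigma>" "up_cross n \<sigma>"] by simp
qed

lemma Ham_ge_block1_full_energy:
  assumes "config n \<sigma>" and "\<epsilon> \<le> 0" and "n \<le> up n \<sigma>"
  shows "energy_of_counts n \<epsilon> h n (up n \<sigma> - n) (up n \<sigma> - n) \<le> Ham n \<epsilon> h \<sigma>"
proof -
  let ?q1 = "real (up1 n \<sigma>)" and ?q2 = "real (up2 n \<sigma>)" and ?a = "real (up_cross n \<sigma>)"
  define k where "k = up n \<sigma> - n"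
  have k: "real k = ?q1 + ?q2 - real n" "up n \<sigma> = n + k"
    using assms(3) up_eq_up1_plus_up2[of n \<sigma>] by (auto simp: k_def)
  have "0 \<le> (real n - ?q1) * (real n - ?q2)"
    using up_counts_bounds(1,2)[of n \<sigma>] by simp
  then have "real n * real k \<le> ?q1 * ?q2"
    unfolding k(1) by (simp add: algebra_simps)
  moreover have "- \<epsilon> * real k \<le> - \<epsilon> * ?a"
    using up_counts_bounds(5)[of n \<sigma>] k(1) assms(2) by (intro mult_left_mono) auto
  ultimately show ?thesis
    unfolding Ham_eq_energy_of_counts[OF assms(1)] k_def[symmetric]
    using energy_of_counts_shift[of n \<epsilon> h "up1 n \<sigma>" "up2 n \<sigma>" "up_cross n \<sigma>"]
      energy_of_counts_shift[of n \<epsilon> h n k k] k(2) up_eq_up1_plus_up2[of n \<sigma>]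
    by simp
qed

definition stair :: "nat \<Rightarrow> nat \<Rightarrow> nat \<Rightarrow> nat \<Rightarrow> int" where
  "stair n q1 q2 i =
     (if i \<in> {1..n} then (if i \<le> q1 then 1 else -1)
      else if i \<in> {n+1..2*n} then (if i \<le> n + q2 then 1 else -1) else 0)"

lemma stair_config: "config n (stair n q1 q2)"
  by (auto simp: config_def stair_def Vtx_def)

lemma stair_counts:
  assumes "q1 \<le> n" "q2 \<le> n"
  shows "up1 n (stair n q1 q2) = q1" "up2 n (stair n q1 q2) = q2"
    "up_cross n (stair n q1 q2) = min q1 q2" "up n (stair n q1 q2) = q1 + q2"
proof -
  have "{i\<in>{1..n}. stair n q1 q2 i = 1} = {1..q1}"
    "{i\<in>{1..n}. stair n q1 q2 (i + n) = 1} = {1..q2}"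
    "{i\<in>{1..n}. stair n q1 q2 i = 1 \<and> stair n q1 q2 (i + n) = 1} = {1..min q1 q2}"
    using assms by (auto simp: stair_def)
  then show "up1 n (stair n q1 q2) = q1" "up2 n (stair n q1 q2) = q2"
    "up_cross n (stair n q1 q2) = min q1 q2"
    by (simp_all add: up1_def up2_eq_shifted_count up_cross_def)
  then show "up n (stair n q1 q2) = q1 + q2"
    by (simp add: up_eq_up1_plus_up2)
qed

lemma Ham_stair:
  "q1 \<le> n \<Longrightarrow> q2 \<le> n \<Longrightarrow> Ham n \<epsilon> h (stair n q1 q2) = energy_of_counts n \<epsilon> h q1 q2 (min q1 q2)"
  by (simp add: Ham_eq_energy_of_counts[OF stair_config] stair_counts)

lemma stair_in_Cp: "q1 \<le> n \<Longrightarrow> q2 \<le> n \<Longrightarrow> stair n q1 q2 \<in> Cp n (q1 + q2)"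
  by (simp add: Cp_iff stair_config stair_counts)

lemma config_diff_subset_Vtx: "config n a \<Longrightarrow> config n b \<Longrightarrow> {i. a i \<noteq> b i} \<subseteq> Vtx n"
  unfolding config_def subset_iff mem_Collect_eq by metis

lemma finite_config_diff: "config n a \<Longrightarrow> config n b \<Longrightarrow> finite {i. a i \<noteq> b i}"
  using config_diff_subset_Vtx finite_subset by (metis Vtx_def finite_atLeastAtMost)

lemma is_path_Cons:
  assumes "is_path n \<omega> \<eta>' \<eta>''" and "config n \<eta>" and "card {i. \<eta> i \<noteq> \<eta>' i} = 1"
  shows "is_path n (\<eta> # \<omega>) \<eta> \<eta>''"
  using assms unfolding is_path_def
  by (auto simp: nth_Cons hd_conv_nth split: nat.split)

lemma path_exists:
  assumes "config n a" and "config n b"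
  shows "\<exists>\<omega>. is_path n \<omega> a b"
proof -
  have "\<exists>\<omega>. is_path n \<omega> a b" if "config n a" "card {i. a i \<noteq> b i} = m" for a m
    using that
  proof (induction m arbitrary: a)
    case 0
    then have "{i. a i \<noteq> b i} = {}"
      using finite_config_diff[OF 0(1) assms(2)] by simp
    then have "a = b"
      by auto
    with 0 show ?case
      by (intro exI[of _ "[a]"]) (simp add: is_path_def)
  next
    case (Suc m)
    then have "{i. a i \<noteq> b i} \<noteq> {}"
      by (metis card.empty Zero_not_Suc)
    then obtain j where j: "a j \<noteq> b j"
      by blast
    define a' where "a' = a(j := b j)"
    have "config n a'"
      using Suc.prems(1) assms(2) config_diff_subset_Vtx[OF Suc.prems(1) assms(2)] j
      by (auto simp: config_def a'_def)
    moreover have "{i. a' i \<noteq> b i} = {i. a i \<noteq> b i} - {j}"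
      by (auto simp: a'_def)
    then have "card {i. a' i \<noteq> b i} = m"
      using Suc.prems finite_config_diff[OF Suc.prems(1) assms(2)] j by simp
    ultimately obtain \<omega> where \<omega>: "is_path n \<omega> a' b"
      using Suc.IH by blast
    have "{i. a i \<noteq> a' i} = {j}"
      using j by (auto simp: a'_def)
    then have "is_path n (a # \<omega>) a b"
      using is_path_Cons[OF \<omega> Suc.prems(1)] by simp
    then show ?case ..
  qed
  then show ?thesis
    using assms(1) by blast
qed

lemma up_single_flip:
  assumes "card {i. x i \<noteq> y i} = 1"
  shows "up n y \<le> up n x + 1"
proof -
  obtain j where j: "{i. x i \<noteq> y i} = {j}"
    using assms card_1_singletonE by blast
  have "x i = y i" if "i \<noteq> j" for i
    using j that by blast
  then have "{i\<in>Vtx n. y i = 1} \<subseteq> insert j {i\<in>Vtx n. x i = 1}"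
    by auto
  then have "card {i\<in>Vtx n. y i = 1} \<le> card (insert j {i\<in>Vtx n. x i = 1})"
    by (intro card_mono) (auto simp: Vtx_def)
  also have "\<dots> \<le> card {i\<in>Vtx n. x i = 1} + 1"
    by (simp add: card_insert_if Vtx_def)
  finally show ?thesis
    by (simp add: up_def)
qed

lemma path_visits_level:
  assumes "is_path n \<omega> a b" and "up n a \<le> p" and "p \<le> up n b"
  shows "\<exists>\<zeta>\<in>set \<omega>. up n \<zeta> = p"
proof -
  define g where "g k = int (up n (\<omega> ! k))" for k
  define m where "m = length \<omega> - 1"
  have ne: "\<omega> \<noteq> []"
    using assms(1) by (simp add: is_path_def)
  have "\<bar>g (k + 1) - g k\<bar> \<le> 1" if "k < m" for k
  proof -
    have "card {i. (\<omega> ! k) i \<noteq> (\<omega> ! Suc k) i} = 1"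
      using assms(1) that by (simp add: is_path_def m_def)
    moreover have "{i. (\<omega> ! Suc k) i \<noteq> (\<omega> ! k) i} = {i. (\<omega> ! k) i \<noteq> (\<omega> ! Suc k) i}"
      by auto
    ultimately show ?thesis
      using up_single_flip[of "\<omega> ! k" "\<omega> ! Suc k" n] up_single_flip[of "\<omega> ! Suc k" "\<omega> ! k" n]
      by (simp add: g_def)
  qed
  moreover have "g 0 \<le> int p" "int p \<le> g m"
    using assms ne by (simp_all add: g_def m_def is_path_def hd_conv_nth last_conv_nth)
  ultimately obtain k where "k \<le> m" "g k = int p"
    using nat0_intermed_int_val[of m g "int p"] by blast
  moreover have "k < length \<omega>"
    using \<open>k \<le> m\<close> ne unfolding m_def by (cases \<omega>) auto
  ultimately show ?thesis
    by (intro bexI[of _ "\<omega> ! k"]) (simp_all add: g_def)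
qed

text \<open>Every path from \<open>\<zeta>\<close> to lower energy crosses level \<open>p\<close>, where the energy is at least \<open>B\<close>.\<close>

lemma Gamma_m_ge_barrier:
  assumes "config n \<zeta>" "config n \<tau>" "Ham n \<epsilon> h \<tau> < Ham n \<epsilon> h \<zeta>" "up n \<zeta> \<le> p"
    and below: "\<And>\<eta>. config n \<eta> \<Longrightarrow> Ham n \<epsilon> h \<eta> < Ham n \<epsilon> h \<zeta> \<Longrightarrow> p \<le> up n \<eta>"
    and level: "\<And>\<sigma>. config n \<sigma> \<Longrightarrow> up n \<sigma> = p \<Longrightarrow> B \<le> Ham n \<epsilon> h \<sigma>"
  shows "ereal (B - Ham n \<epsilon> h \<zeta>) \<le> Gamma_m n \<epsilon> h"
proof -
  define L where "L = {\<eta>\<in>Xcfg n. Ham n \<epsilon> h \<eta> < Ham n \<epsilon> h \<zeta>}"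
  have "\<tau> \<in> L"
    using assms(2,3) by (simp add: L_def Xcfg_def)
  have "B \<le> Phi n \<epsilon> h \<zeta> \<eta>" if "\<eta> \<in> L" for \<eta>
  proof -
    have \<eta>: "config n \<eta>" "Ham n \<epsilon> h \<eta> < Ham n \<epsilon> h \<zeta>"
      using that by (auto simp: L_def Xcfg_def)
    have "B \<le> Max (Ham n \<epsilon> h ` set \<omega>)" if \<omega>: "is_path n \<omega> \<zeta> \<eta>" for \<omega>
    proof -
      obtain s where s: "s \<in> set \<omega>" "up n s = p"
        using path_visits_level[OF \<omega> assms(4) below[OF \<eta>]] by blast
      then have "B \<le> Ham n \<epsilon> h s"
        using \<omega> level by (simp add: is_path_def)
      also have "\<dots> \<le> Max (Ham n \<epsilon> h ` set \<omega>)"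
        using s(1) by simp
      finally show ?thesis .
    qed
    then show ?thesis
      unfolding Phi_def using path_exists[OF assms(1) \<eta>(1)] by (intro cInf_greatest) auto
  qed
  then have "B \<le> PhiSet n \<epsilon> h \<zeta> L"
    unfolding PhiSet_def using \<open>\<tau> \<in> L\<close> by (intro cInf_greatest) auto
  then have "ereal (B - Ham n \<epsilon> h \<zeta>) \<le> stab n \<epsilon> h \<zeta>"
    using \<open>\<tau> \<in> L\<close> by (auto simp: stab_def L_def Let_def)
  also have "stab n \<epsilon> h \<zeta> \<le> Gamma_m n \<epsilon> h"
  proof -
    have "\<zeta> \<in> Xcfg n - Xs n \<epsilon> h"
      using assms(1-3) by (auto simp: Xcfg_def Xs_def)
    then show ?thesis
      unfolding Gamma_m_def by (intro Sup_upper) simp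
  qed
  finally show ?thesis .
qed

lemma int_mult_shift_nonneg:
  fixes x :: int and t :: real
  assumes "\<bar>t\<bar> \<le> 1"
  shows "0 \<le> real_of_int x * (real_of_int x + t)"
proof -
  consider "x = 0" | "1 \<le> x" | "x \<le> -1"
    by linarith
  then show ?thesis
  proof cases
    case 2
    then have "1 \<le> real_of_int x" by simp
    with assms show ?thesis by simp
  next
    case 3
    then have "real_of_int x \<le> -1" by simp
    with assms show ?thesis by (simp add: mult_nonpos_nonpos)
  qed simp
qed

lemma block1_energy_diff:
  "energy_of_counts n \<epsilon> h p 0 0 - energy_of_counts n \<epsilon> h q 0 0
     = 2 * (real p - real q) * (real n + \<epsilon> - h - real p - real q)"
  unfolding energy_of_counts_def power2_eq_square by (simp add: field_simps)

lemma block1_full_energy_diff: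
  "energy_of_counts n \<epsilon> h n k' k' - energy_of_counts n \<epsilon> h n k k
     = 2 * (real k' - real k) * (real n - \<epsilon> - h - real k' - real k)"
  unfolding energy_of_counts_def power2_eq_square by (simp add: field_simps)

lemma block1_full_energy_le_block1_energy:
  assumes "k \<le> n" and "0 \<le> h"
  shows "energy_of_counts n \<epsilon> h n k k \<le> energy_of_counts n \<epsilon> h (n - k) 0 0"
proof -
  have "energy_of_counts n \<epsilon> h (n - k) 0 0 - energy_of_counts n \<epsilon> h n k k = 4 * real k * h"
    using assms(1) unfolding energy_of_counts_def power2_eq_square by (simp add: of_nat_diff field_simps)
  moreover have "0 \<le> 4 * real k * h"
    using assms(2) by simp
  ultimately show ?thesis
    by linarith
qed

lemma block1_energy_le_max:
  assumes "\<bar>real n - 2 * real p + \<epsilon> - h\<bar> \<le> 1"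
  shows "energy_of_counts n \<epsilon> h q 0 0 \<le> energy_of_counts n \<epsilon> h p 0 0"
proof -
  define d where "d = int p - int q"
  have "energy_of_counts n \<epsilon> h p 0 0 - energy_of_counts n \<epsilon> h q 0 0
      = 2 * (real_of_int d * (real_of_int d + (real n - 2 * real p + \<epsilon> - h)))"
    unfolding block1_energy_diff d_def by (simp add: algebra_simps)
  then show ?thesis
    using int_mult_shift_nonneg[OF assms, of d] by simp
qed

lemma block1_full_energy_le_max:
  assumes "\<bar>real n - 2 * real k - \<epsilon> - h\<bar> \<le> 1"
  shows "energy_of_counts n \<epsilon> h n j j \<le> energy_of_counts n \<epsilon> h n k k"
proof -
  define d where "d = int k - int j"
  have "energy_of_counts n \<epsilon> h n k k - energy_of_counts n \<epsilon> h n j j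
      = 2 * (real_of_int d * (real_of_int d + (real n - 2 * real k - \<epsilon> - h)))"
    unfolding block1_full_energy_diff d_def by (simp add: algebra_simps)
  then show ?thesis
    using int_mult_shift_nonneg[OF assms, of d] by simp
qed

lemma Cset_subset_Cp: "Cset n p1 p2 a \<subseteq> Cp n (p1 + p2)"
  by (auto simp: Cset_iff Cp_iff up_eq_up1_plus_up2)

lemma Ham_on_Cset: "\<sigma> \<in> Cset n p1 p2 a \<Longrightarrow> Ham n \<epsilon> h \<sigma> = energy_of_counts n \<epsilon> h p1 p2 a"
  by (simp add: Cset_iff Ham_eq_energy_of_counts)

lemma level_minimizers_maximize:
  assumes "p \<in> Q" and "S \<subseteq> Cp n p"
    and S: "\<And>\<sigma>. \<sigma> \<in> S \<Longrightarrow> Ham n \<epsilon> h \<sigma> = B"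
    and level: "\<And>\<tau>. \<tau> \<in> Cp n p \<Longrightarrow> B \<le> Ham n \<epsilon> h \<tau>"
    and witness: "\<And>q. q \<in> Q \<Longrightarrow> \<exists>w\<in>Cp n q. Ham n \<epsilon> h w \<le> B"
    and "\<sigma> \<in> S"
  shows "\<sigma> \<in> (\<Union>q\<in>Q. Mp n \<epsilon> h q)" and "\<forall>\<tau>\<in>(\<Union>q\<in>Q. Mp n \<epsilon> h q). Ham n \<epsilon> h \<tau> \<le> Ham n \<epsilon> h \<sigma>"
proof -
  have "\<sigma> \<in> Mp n \<epsilon> h p"
    using assms(2,6) S[OF assms(6)] level by (auto simp: Mp_def)
  then show "\<sigma> \<in> (\<Union>q\<in>Q. Mp n \<epsilon> h q)"
    using assms(1) by blast
  show "\<forall>\<tau>\<in>(\<Union>q\<in>Q. Mp n \<epsilon> h q). Ham n \<epsilon> h \<tau> \<le> Ham n \<epsilon> h \<sigma>"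
  proof
    fix \<tau> assume "\<tau> \<in> (\<Union>q\<in>Q. Mp n \<epsilon> h q)"
    then obtain q where "q \<in> Q" "\<tau> \<in> Mp n \<epsilon> h q"
      by blast
    moreover obtain w where "w \<in> Cp n q" "Ham n \<epsilon> h w \<le> B"
      using witness[OF \<open>q \<in> Q\<close>] by blast
    ultimately show "Ham n \<epsilon> h \<tau> \<le> Ham n \<epsilon> h \<sigma>"
      using S[OF assms(6)] by (force simp: Mp_def)
  qed
qed

lemma pstar1_props:
  assumes "0 \<le> h" and "h \<le> 1" and "0 \<le> \<epsilon>" and "\<epsilon> \<le> 1"
  shows "pstar1 n \<epsilon> h \<le> n" and "\<bar>real n - 2 * real (pstar1 n \<epsilon> h) + \<epsilon> - h\<bar> \<le> 1"
    and "Gamma1 n \<epsilon> h = energy_of_counts n \<epsilon> h (pstar1 n \<epsilon> h) 0 0 - energy_of_counts n \<epsilon> h 0 0 0"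
proof -
  have "pstar1 n \<epsilon> h \<le> n \<and> \<bar>real n - 2 * real (pstar1 n \<epsilon> h) + \<epsilon> - h\<bar> \<le> 1
      \<and> Gamma1 n \<epsilon> h = energy_of_counts n \<epsilon> h (pstar1 n \<epsilon> h) 0 0 - energy_of_counts n \<epsilon> h 0 0 0"
  proof (cases "even n")
    case True
    then obtain m where "n = 2 * m" by blast
    with True assms show ?thesis
      by (simp add: pstar1_def Gamma1_def energy_of_counts_def power2_eq_square field_simps abs_le_iff)
  next
    case False
    then obtain m where "n = 2 * m + 1" using oddE by blast
    with False assms show ?thesis
      by (cases "h \<le> \<epsilon>") (simp_all add: pstar1_def Gamma1_def energy_of_counts_def power2_eq_square field_simps abs_le_iff)
  qed
  then show "pstar1 n \<epsilon> h \<le> n" "\<bar>real n - 2 * real (pstar1 n \<epsilon> h) + \<epsilon> - h\<bar> \<le> 1"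
    "Gamma1 n \<epsilon> h = energy_of_counts n \<epsilon> h (pstar1 n \<epsilon> h) 0 0 - energy_of_counts n \<epsilon> h 0 0 0"
    by auto
qed

lemma pstar2_eq: "pstar2 n = n + n div 2"
  by (auto simp: pstar2_def elim!: oddE)

lemma Gamma2_eq:
  "Gamma2 n \<epsilon> h = energy_of_counts n \<epsilon> h n (n div 2) (n div 2) - energy_of_counts n \<epsilon> h n 0 0"
proof (cases "even n")
  case True
  then obtain m where "n = 2 * m" by blast
  with True show ?thesis
    by (simp add: Gamma2_def energy_of_counts_def power2_eq_square field_simps)
next
  case False
  then obtain m where "n = 2 * m + 1" using oddE by blast
  with False show ?thesis
    by (simp add: Gamma2_def energy_of_counts_def power2_eq_square field_simps)
qed

lemma Cset_pstar1_maximize_minima: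
  fixes n :: nat and \<epsilon> h :: real
  assumes "0 \<le> h" and "h \<le> 1" and "0 \<le> \<epsilon>" and "\<epsilon> \<le> 1"
  defines "p \<equiv> pstar1 n \<epsilon> h"
  defines "S \<equiv> Cset n p 0 0 \<union> Cset n 0 p 0" and "U \<equiv> \<Union>q\<in>{0..2*n}. Mp n \<epsilon> h q"
  shows "S \<noteq> {} \<and> (\<forall>\<sigma>\<in>S. \<sigma> \<in> U \<and> (\<forall>\<tau>\<in>U. Ham n \<epsilon> h \<tau> \<le> Ham n \<epsilon> h \<sigma>))"
proof -
  note p = pstar1_props[where n = n, OF assms(1-4), folded p_def]
  let ?E = "energy_of_counts n \<epsilon> h p 0 0"
  have S_level: "S \<subseteq> Cp n p"
    using Cset_subset_Cp[of n p 0 0] Cset_subset_Cp[of n 0 p 0] by (auto simp: S_def)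
  have S_energy: "Ham n \<epsilon> h \<sigma> = ?E" if "\<sigma> \<in> S" for \<sigma>
    using that Ham_on_Cset energy_of_counts_swap by (auto simp: S_def)
  have level_bound: "?E \<le> Ham n \<epsilon> h \<tau>" if "\<tau> \<in> Cp n p" for \<tau>
    using that Ham_ge_block1_energy assms(4) by (auto simp: Cp_iff)
  have witness: "\<exists>w\<in>Cp n q. Ham n \<epsilon> h w \<le> ?E" if "q \<in> {0..2*n}" for q
  proof (cases "q \<le> n")
    case True
    then have "Ham n \<epsilon> h (stair n q 0) \<le> ?E"
      using block1_energy_le_max[OF p(2), of q] by (simp add: Ham_stair)
    then show ?thesis
      using stair_in_Cp[of q n 0] True by auto
  next
    case False
    have "energy_of_counts n \<epsilon> h n (q - n) (q - n) \<le> energy_of_counts n \<epsilon> h (n - (q - n)) 0 0"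
      using False that assms(1) by (intro block1_full_energy_le_block1_energy) auto
    also have "\<dots> \<le> ?E"
      by (rule block1_energy_le_max[OF p(2)])
    finally have "Ham n \<epsilon> h (stair n n (q - n)) \<le> ?E"
      using False that by (simp add: Ham_stair)
    then show ?thesis
      using False that stair_in_Cp[of n n "q - n"] by auto
  qed
  have "stair n p 0 \<in> S"
    using p(1) by (simp add: S_def Cset_iff stair_config stair_counts)
  moreover have "\<sigma> \<in> U \<and> (\<forall>\<tau>\<in>U. Ham n \<epsilon> h \<tau> \<le> Ham n \<epsilon> h \<sigma>)" if "\<sigma> \<in> S" for \<sigma>
    using level_minimizers_maximize[where Q = "{0..2*n}", OF _ S_level S_energy level_bound witness that] p(1)
    unfolding U_def by simp
  ultimately show ?thesis
    by blast
qed

lemma Ham_stair_all_plus_lt_all_minus: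
  assumes "0 < h" and "0 < n"
  shows "Ham n \<epsilon> h (stair n n n) < Ham n \<epsilon> h (stair n 0 0)"
  using assms by (simp add: Ham_stair energy_of_counts_def power2_eq_square field_simps)

lemma Gamma_m_ge_Gamma1:
  assumes "n \<ge> 1" and "0 < h" and "h \<le> 1" and "0 \<le> \<epsilon>" and "\<epsilon> \<le> 1"
  shows "ereal (Gamma1 n \<epsilon> h) \<le> Gamma_m n \<epsilon> h"
proof -
  define p where "p = pstar1 n \<epsilon> h"
  note p = pstar1_props[where n = n, OF less_imp_le[OF assms(2)] assms(3-5), folded p_def]
  have minus: "Ham n \<epsilon> h (stair n 0 0) = energy_of_counts n \<epsilon> h 0 0 0" "up n (stair n 0 0) = 0"
    by (simp_all add: Ham_stair stair_counts)
  have "ereal (energy_of_counts n \<epsilon> h p 0 0 - Ham n \<epsilon> h (stair n 0 0)) \<le> Gamma_m n \<epsilon> h"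
  proof (rule Gamma_m_ge_barrier[OF stair_config stair_config Ham_stair_all_plus_lt_all_minus])
    fix \<eta> assume \<eta>: "config n \<eta>" "Ham n \<epsilon> h \<eta> < Ham n \<epsilon> h (stair n 0 0)"
    show "p \<le> up n \<eta>"
    proof (rule ccontr)
      assume "\<not> p \<le> up n \<eta>"
      then have "real (up n \<eta>) + 1 \<le> real n"
        using p(1) by simp
      then have "0 \<le> 2 * real (up n \<eta>) * (real n + \<epsilon> - h - real (up n \<eta>))"
        using assms(3,4) by (intro mult_nonneg_nonneg) auto
      then have "energy_of_counts n \<epsilon> h 0 0 0 \<le> energy_of_counts n \<epsilon> h (up n \<eta>) 0 0"
        using block1_energy_diff[of n \<epsilon> h "up n \<eta>" 0] by simp
      also have "\<dots> \<le> Ham n \<epsilon> h \<eta>"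
        using Ham_ge_block1_energy[OF \<eta>(1) assms(5)] .
      finally show False
        using \<eta>(2) minus by simp
    qed
  next
    fix \<sigma> assume "config n \<sigma>" "up n \<sigma> = p"
    then show "energy_of_counts n \<epsilon> h p 0 0 \<le> Ham n \<epsilon> h \<sigma>"
      using Ham_ge_block1_energy[of n \<sigma> \<epsilon> h] assms(5) by simp
  qed (use assms(1,2) minus in simp_all)
  then show ?thesis
    using p(3) minus by (simp add: p_def)
qed

lemma Cset_pstar2_maximize_minima:
  fixes n :: nat and \<epsilon> h :: real
  assumes "\<epsilon> < 0" and "-\<epsilon> < h" and "h \<le> 1"
  defines "m \<equiv> n div 2"
  defines "S \<equiv> Cset n n m m \<union> Cset n m n m" and "U \<equiv> \<Union>q\<in>{n..2*n}. Mp n \<epsilon> h q"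
  shows "S \<noteq> {} \<and> (\<forall>\<sigma>\<in>S. \<sigma> \<in> U \<and> (\<forall>\<tau>\<in>U. Ham n \<epsilon> h \<tau> \<le> Ham n \<epsilon> h \<sigma>))"
proof -
  let ?E = "energy_of_counts n \<epsilon> h n m m"
  have "\<bar>real n - 2 * real m - \<epsilon> - h\<bar> \<le> 1"
    using assms(1-3) unfolding m_def by (cases "even n") (auto elim!: oddE)
  note max = block1_full_energy_le_max[OF this]
  have "m \<le> n"
    by (simp add: m_def)
  have S_level: "S \<subseteq> Cp n (n + m)"
    using Cset_subset_Cp[of n n m m] Cset_subset_Cp[of n m n m] by (auto simp: S_def add.commute)
  have S_energy: "Ham n \<epsilon> h \<sigma> = ?E" if "\<sigma> \<in> S" for \<sigma>
    using that Ham_on_Cset energy_of_counts_swap by (auto simp: S_def)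
  have level_bound: "?E \<le> Ham n \<epsilon> h \<tau>" if "\<tau> \<in> Cp n (n + m)" for \<tau>
    using that Ham_ge_block1_full_energy[of n \<tau> \<epsilon> h] assms(1) by (auto simp: Cp_iff)
  have witness: "\<exists>w\<in>Cp n q. Ham n \<epsilon> h w \<le> ?E" if "q \<in> {n..2*n}" for q
  proof -
    have "q - n \<le> n"
      using that by auto
    then have "Ham n \<epsilon> h (stair n n (q - n)) \<le> ?E"
      using max[of "q - n"] by (simp add: Ham_stair)
    then show ?thesis
      using that stair_in_Cp[of n n "q - n"] by auto
  qed
  have "stair n n m \<in> S"
    using \<open>m \<le> n\<close> by (simp add: S_def Cset_iff stair_config stair_counts)
  moreover have "\<sigma> \<in> U \<and> (\<forall>\<tau>\<in>U. Ham n \<epsilon> h \<tau> \<le> Ham n \<epsilon> h \<sigma>)" if "\<sigma> \<in> S" for \<sigma>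
    using level_minimizers_maximize[where Q = "{n..2*n}", OF _ S_level S_energy level_bound witness that]
      \<open>m \<le> n\<close>
    unfolding U_def by simp
  ultimately show ?thesis
    by blast
qed

lemma Gamma_m_ge_Gamma2:
  assumes "n \<ge> 1" and "\<epsilon> < 0" and "-\<epsilon> < h" and "h \<le> 1"
  shows "ereal (Gamma2 n \<epsilon> h) \<le> Gamma_m n \<epsilon> h"
proof -
  define m where "m = n div 2"
  have full: "Ham n \<epsilon> h (stair n n 0) = energy_of_counts n \<epsilon> h n 0 0" "up n (stair n n 0) = n"
    by (simp_all add: Ham_stair stair_counts)
  have "0 < real n * (\<epsilon> + h)"
    using assms by simp
  then have "Ham n \<epsilon> h (stair n n n) < Ham n \<epsilon> h (stair n n 0)"
    using block1_full_energy_diff[of n \<epsilon> h n 0] by (simp add: Ham_stair algebra_simps)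
  then have "ereal (energy_of_counts n \<epsilon> h n m m - Ham n \<epsilon> h (stair n n 0)) \<le> Gamma_m n \<epsilon> h"
  proof (rule Gamma_m_ge_barrier[OF stair_config stair_config])
    fix \<eta> assume \<eta>: "config n \<eta>" "Ham n \<epsilon> h \<eta> < Ham n \<epsilon> h (stair n n 0)"
    show "n + m \<le> up n \<eta>"
    proof (rule ccontr)
      assume "\<not> n + m \<le> up n \<eta>"
      have "energy_of_counts n \<epsilon> h n 0 0 \<le> Ham n \<epsilon> h \<eta>"
      proof (cases "up n \<eta> \<le> n")
        case True
        then have "0 \<le> 2 * (real n - real (up n \<eta>)) * (real (up n \<eta>) + h - \<epsilon>)"
          using assms by (intro mult_nonneg_nonneg) auto
        then have "energy_of_counts n \<epsilon> h n 0 0 \<le> energy_of_counts n \<epsilon> h (up n \<eta>) 0 0"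
          using block1_energy_diff[of n \<epsilon> h "up n \<eta>" n] by (simp add: algebra_simps)
        also have "\<dots> \<le> Ham n \<epsilon> h \<eta>"
          using Ham_ge_block1_energy[OF \<eta>(1)] assms by simp
        finally show ?thesis .
      next
        case False
        define k where "k = up n \<eta> - n"
        have "real k + 1 \<le> real n"
          using \<open>\<not> n + m \<le> up n \<eta>\<close> by (simp add: k_def m_def)
        then have "0 \<le> 2 * real k * (real n - \<epsilon> - h - real k)"
          using assms by (intro mult_nonneg_nonneg) auto
        then have "energy_of_counts n \<epsilon> h n 0 0 \<le> energy_of_counts n \<epsilon> h n k k"
          using block1_full_energy_diff[of n \<epsilon> h k 0] by simp
        also have "\<dots> \<le> Ham n \<epsilon> h \<eta>"
          using Ham_ge_block1_full_energy[OF \<eta>(1)] False assms by (simp add: k_def)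
        finally show ?thesis .
      qed
      then show False
        using \<eta>(2) full by simp
    qed
  next
    fix \<sigma> assume "config n \<sigma>" "up n \<sigma> = n + m"
    then show "energy_of_counts n \<epsilon> h n m m \<le> Ham n \<epsilon> h \<sigma>"
      using Ham_ge_block1_full_energy[of n \<sigma> \<epsilon> h] assms(2) by simp
  qed (simp add: full)
  then show ?thesis
    using Gamma2_eq[of n \<epsilon> h] full by (simp add: m_def)
qed

theorem proposition5p5:
  fixes n :: nat and \<epsilon> h :: real
  assumes "n \<ge> 2" and "0 < h" and "h \<le> 1" and "-1 \<le> \<epsilon>" and "\<epsilon> \<le> 1"
  shows
   "(0 \<le> \<epsilon> \<longrightarrow>
      (let p = pstar1 n \<epsilon> h; U = (\<Union>q\<in>{0..2*n}. Mp n \<epsilon> h q); S = Cset n p 0 0 \<union> Cset n 0 p 0 in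
        S \<noteq> {} \<and> (\<forall>\<sigma>\<in>S. \<sigma> \<in> U \<and> (\<forall>\<tau>\<in>U. Ham n \<epsilon> h \<tau> \<le> Ham n \<epsilon> h \<sigma>)))
      \<and> Gamma_m n \<epsilon> h \<ge> ereal (Gamma1 n \<epsilon> h))
  \<and> (0 < -\<epsilon> \<and> -\<epsilon> < h \<longrightarrow>
      (let p = pstar2 n; U = (\<Union>q\<in>{n..2*n}. Mp n \<epsilon> h q);
           S = Cset n n (p - n) (p - n) \<union> Cset n (p - n) n (p - n) in
        S \<noteq> {} \<and> (\<forall>\<sigma>\<in>S. \<sigma> \<in> U \<and> (\<forall>\<tau>\<in>U. Ham n \<epsilon> h \<tau> \<le> Ham n \<epsilon> h \<sigma>)))
      \<and> Gamma_m n \<epsilon> h \<ge> ereal (Gamma2 n \<epsilon> h))"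
  unfolding Let_def pstar2_eq
  using Cset_pstar1_maximize_minima[where n = n and \<epsilon> = \<epsilon> and h = h]
    Gamma_m_ge_Gamma1[where n = n and \<epsilon> = \<epsilon> and h = h]
    Cset_pstar2_maximize_minima[where n = n and \<epsilon> = \<epsilon> and h = h]
    Gamma_m_ge_Gamma2[where n = n and \<epsilon> = \<epsilon> and h = h] assms
  by simp

end
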